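(* For $a,b\in\mathbb{C}$ let $\mathfrak{g}_{a,b}$ be the Lie algebra with basis $\{L_i,W_i: i\in\mathbb{Z}\}$ and brackets $[L_m,L_n]=(m-n)L_{m+n}$, $[W_m,W_n]=0$, $[L_m,W_n]=((m+1)(a-1)-(n+1))W_{m+n}+bW_{m+n+1}$ (so $[W_n,L_m]=-[L_m,W_n]$). Each of the following bilinear products $\circ$ (given on basis elements, for all $m,n\in\mathbb{Z}$) is a compatible left-symmetric algebra structure on the indicated Lie algebra. On $\mathfrak{g}_{a,b}$ for all $a,b\in\mathbb{C}$: (1) $L_m\circ L_n=cL_{m+n+1}-(n+1)L_{m+n}$, $L_m\circ W_n=((a-1)(m+1)-(n+1))W_{m+n}+bW_{m+n+1}$, $W_m\circ L_n=0$, $W_m\circ W_n=0$, where $c\in\mathbb{C}$; (2) $L_m\circ L_n=cL_{m+n+1}-(n+1)L_{m+n}$, $L_m\circ W_n=((a-1)(m+1)-(n+1))W_{m+n}+(b+c)W_{m+n+1}$, $W_m\circ L_n=cW_{m+n+1}$, $W_m\circ W_n=0$, where $c\in\mathbb{C}\setminus\{0\}$; (3) $L_m\circ L_n=cL_{m+n+1}-(n+1)L_{m+n}$, $L_m\circ W_n=((a-2)(m+1)-(n+1))W_{m+n}+(b+c)W_{m+n+1}$, $W_m\circ L_n=-(n+1)W_{m+n}+cW_{m+n+1}$, $W_m\circ W_n=0$, where $c\in\mathbb{C}$. On $\mathfrak{g}_{1,b}$ for all $b\in\mathbb{C}$: (4) $L_m\circ L_n=2bL_{m+n+1}-(n+1)L_{m+n}$,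 $L_m\circ W_n=-(n+1)W_{m+n}+bW_{m+n+1}$, $W_m\circ L_n=0$, $W_m\circ W_n=k_1L_{m+n+1}$, where $k_1\neq0$. On $\mathfrak{g}_{1,b}$ with $b\neq0$: (5) $L_m\circ L_n=bL_{m+n+1}-(n+1)L_{m+n}$, $L_m\circ W_n=dL_{m+n+1}-(n+1)W_{m+n}+2bW_{m+n+1}$, $W_m\circ L_n=dL_{m+n+1}+bW_{m+n+1}$, $W_m\circ W_n=-\frac{d^2}{b}L_{m+n+1}-dW_{m+n+1}$, where $d\neq0$. On $\mathfrak{g}_{1,0}$: (6) $L_m\circ L_n=cL_{m+n+1}-(n+1)L_{m+n}$, $L_m\circ W_n=-(n+1)W_{m+n}$, $W_m\circ L_n=0$, $W_m\circ W_n=k_2W_{m+n+1}$, where $c\in\mathbb{C}$, $k_2\in\mathbb{C}\setminus\{0\}$; (7) $L_m\circ L_n=-(n+1)L_{m+n}$, $L_m\circ W_n=-(n+1)W_{m+n}$, $W_m\circ L_n=0$, $W_m\circ W_n=k_1L_{m+n+1}+k_2W_{m+n+1}$, where $k_1,k_2\in\mathbb{C}\setminus\{0\}$; (8) $L_m\circ L_n=cL_{m+n+1}-(n+1)L_{m+n}$, $L_m\circ W_n=h_1L_{m+n+1}-(n+1)W_{m+n}$, $W_m\circ L_n=h_1L_{m+n+1}$, $W_m\circ W_n=\frac{h_1(h_1-k_2)}{c}L_{m+n+1}+k_2W_{m+n+1}$, where $c,h_1\in\mathbb{C}\setminus\{0\}$, $k_2\in\mathbb{C}$; (9) $L_m\circ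 L_n=-(n+1)L_{m+n}$, $L_m\circ W_n=h_1L_{m+n+1}-(n+1)W_{m+n}$, $W_m\circ L_n=h_1L_{m+n+1}$, $W_m\circ W_n=k_1L_{m+n+1}+h_1W_{m+n+1}$, where $h_1,k_1\in\mathbb{C}\setminus\{0\}$; (10) $L_m\circ L_n=cL_{m+n+1}-(n+1)L_{m+n}$, $L_m\circ W_n=cW_{m+n+1}-(n+1)W_{m+n}$, $W_m\circ L_n=cW_{m+n+1}$, $W_m\circ W_n=k_1L_{m+n+1}+k_2W_{m+n+1}$, where $c\in\mathbb{C}\setminus\{0\}$, $(k_1,k_2)\in\mathbb{C}^2\setminus\{(0,0)\}$; (11) $L_m\circ L_n=cL_{m+n+1}-(n+1)L_{m+n}$, $L_m\circ W_n=-(m+n+2)W_{m+n}+cW_{m+n+1}$, $W_m\circ L_n=-(n+1)W_{m+n}+cW_{m+n+1}$, $W_m\circ W_n=k_2W_{m+n+1}$, where $c\in\mathbb{C}$, $k_2\in\mathbb{C}\setminus\{0\}$.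
   Context: A left-symmetric algebra is a vector space $A$ with a bilinear product $\circ$ satisfying $(x\circ y)\circ z-x\circ(y\circ z)=(y\circ x)\circ z-y\circ(x\circ z)$ for all $x,y,z\in A$. A compatible left-symmetric algebra structure on a Lie algebra $(\mathfrak{g},[\cdot,\cdot])$ is a left-symmetric product $\circ$ on the vector space $\mathfrak{g}$ such that $x\circ y-y\circ x=[x,y]$ for all $x,y\in\mathfrak{g}$. (The Lie algebra $\mathfrak{g}_{a,b}$ in the claim is the coefficient Lie algebra of the Lie conformal algebra $\mathcal{W}(a,b)$.) *)

theory Defs
  imports Complex_Main
begin

datatype basis = L int | W int

text \<open>Vectors are coefficient functions on the basis; elements of the vector space are the
finitely supported ones.\<close>
type_synonym vec = "basis \<Rightarrow> complex"

definition fsupp :: "vec \<Rightarrow> bool" where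
  "fsupp x \<longleftrightarrow> finite {i. x i \<noteq> 0}"

definition vadd :: "vec \<Rightarrow> vec \<Rightarrow> vec" (infixl "\<oplus>" 65) where
  "vadd u v = (\<lambda>k. u k + v k)"
definition vsub :: "vec \<Rightarrow> vec \<Rightarrow> vec" (infixl "\<ominus>" 65) where
  "vsub u v = (\<lambda>k. u k - v k)"
definition vzero :: vec where
  "vzero = (\<lambda>k. 0)"

definition sm :: "complex \<Rightarrow> basis \<Rightarrow> vec" where
  "sm a i = (\<lambda>k. if k = i then a else 0)"

definition bil :: "(basis \<Rightarrow> basis \<Rightarrow> vec) \<Rightarrow> vec \<Rightarrow> vec \<Rightarrow> vec" where
  "bil P x y = (\<lambda>k. \<Sum>i\<in>{i. x i \<noteq> 0}. \<Sum>j\<in>{j. y j \<noteq> 0}. x i * y j * P i j k)"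

fun lie :: "complex \<Rightarrow> complex \<Rightarrow> basis \<Rightarrow> basis \<Rightarrow> vec" where
  "lie a b (L m) (L n) = sm (of_int (m - n)) (L (m + n))"
| "lie a b (W m) (W n) = vzero"
| "lie a b (L m) (W n) =
     sm (of_int (m + 1) * (a - 1) - of_int (n + 1)) (W (m + n)) \<oplus> sm b (W (m + n + 1))"
| "lie a b (W n) (L m) =
     sm (-(of_int (m + 1) * (a - 1) - of_int (n + 1))) (W (m + n)) \<oplus> sm (-b) (W (m + n + 1))"

definition is_clsa :: "complex \<Rightarrow> complex \<Rightarrow> (basis \<Rightarrow> basis \<Rightarrow> vec) \<Rightarrow> bool" where
  "is_clsa a b P \<longleftrightarrow>
     (\<forall>x y z. fsupp x \<and> fsupp y \<and> fsupp z \<longrightarrow>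
        bil P (bil P x y) z \<ominus> bil P x (bil P y z) = bil P (bil P y x) z \<ominus> bil P y (bil P x z)) \<and>
     (\<forall>x y. fsupp x \<and> fsupp y \<longrightarrow> bil P x y \<ominus> bil P y x = bil (lie a b) x y)"

abbreviation nn :: "int \<Rightarrow> complex" where "nn n \<equiv> of_int (n + 1)"

fun P1 :: "complex \<Rightarrow> complex \<Rightarrow> complex \<Rightarrow> basis \<Rightarrow> basis \<Rightarrow> vec" where
  "P1 a b c (L m) (L n) = sm c (L (m+n+1)) \<oplus> sm (- nn n) (L (m+n))"
| "P1 a b c (L m) (W n) = sm ((a-1) * nn m - nn n) (W (m+n)) \<oplus> sm b (W (m+n+1))"
| "P1 a b c (W m) (L n) = vzero"
| "P1 a b c (W m) (W n) = vzero"

fun P2 :: "complex \<Rightarrow> complex \<Rightarrow> complex \<Rightarrow> basis \<Rightarrow> basis \<Rightarrow> vec" where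
  "P2 a b c (L m) (L n) = sm c (L (m+n+1)) \<oplus> sm (- nn n) (L (m+n))"
| "P2 a b c (L m) (W n) = sm ((a-1) * nn m - nn n) (W (m+n)) \<oplus> sm (b + c) (W (m+n+1))"
| "P2 a b c (W m) (L n) = sm c (W (m+n+1))"
| "P2 a b c (W m) (W n) = vzero"

fun P3 :: "complex \<Rightarrow> complex \<Rightarrow> complex \<Rightarrow> basis \<Rightarrow> basis \<Rightarrow> vec" where
  "P3 a b c (L m) (L n) = sm c (L (m+n+1)) \<oplus> sm (- nn n) (L (m+n))"
| "P3 a b c (L m) (W n) = sm ((a-2) * nn m - nn n) (W (m+n)) \<oplus> sm (b + c) (W (m+n+1))"
| "P3 a b c (W m) (L n) = sm (- nn n) (W (m+n)) \<oplus> sm c (W (m+n+1))"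
| "P3 a b c (W m) (W n) = vzero"

fun P4 :: "complex \<Rightarrow> complex \<Rightarrow> basis \<Rightarrow> basis \<Rightarrow> vec" where
  "P4 b k1 (L m) (L n) = sm (2 * b) (L (m+n+1)) \<oplus> sm (- nn n) (L (m+n))"
| "P4 b k1 (L m) (W n) = sm (- nn n) (W (m+n)) \<oplus> sm b (W (m+n+1))"
| "P4 b k1 (W m) (L n) = vzero"
| "P4 b k1 (W m) (W n) = sm k1 (L (m+n+1))"

fun P5 :: "complex \<Rightarrow> complex \<Rightarrow> basis \<Rightarrow> basis \<Rightarrow> vec" where
  "P5 b d (L m) (L n) = sm b (L (m+n+1)) \<oplus> sm (- nn n) (L (m+n))"
| "P5 b d (L m) (W n) = sm d (L (m+n+1)) \<oplus> sm (- nn n) (W (m+n)) \<oplus> sm (2 * b) (W (m+n+1))"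
| "P5 b d (W m) (L n) = sm d (L (m+n+1)) \<oplus> sm b (W (m+n+1))"
| "P5 b d (W m) (W n) = sm (- (d^2 / b)) (L (m+n+1)) \<oplus> sm (- d) (W (m+n+1))"

fun P6 :: "complex \<Rightarrow> complex \<Rightarrow> basis \<Rightarrow> basis \<Rightarrow> vec" where
  "P6 c k2 (L m) (L n) = sm c (L (m+n+1)) \<oplus> sm (- nn n) (L (m+n))"
| "P6 c k2 (L m) (W n) = sm (- nn n) (W (m+n))"
| "P6 c k2 (W m) (L n) = vzero"
| "P6 c k2 (W m) (W n) = sm k2 (W (m+n+1))"

fun P7 :: "complex \<Rightarrow> complex \<Rightarrow> basis \<Rightarrow> basis \<Rightarrow> vec" where
  "P7 k1 k2 (L m) (L n) = sm (- nn n) (L (m+n))"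
| "P7 k1 k2 (L m) (W n) = sm (- nn n) (W (m+n))"
| "P7 k1 k2 (W m) (L n) = vzero"
| "P7 k1 k2 (W m) (W n) = sm k1 (L (m+n+1)) \<oplus> sm k2 (W (m+n+1))"

fun P8 :: "complex \<Rightarrow> complex \<Rightarrow> complex \<Rightarrow> basis \<Rightarrow> basis \<Rightarrow> vec" where
  "P8 c h1 k2 (L m) (L n) = sm c (L (m+n+1)) \<oplus> sm (- nn n) (L (m+n))"
| "P8 c h1 k2 (L m) (W n) = sm h1 (L (m+n+1)) \<oplus> sm (- nn n) (W (m+n))"
| "P8 c h1 k2 (W m) (L n) = sm h1 (L (m+n+1))"
| "P8 c h1 k2 (W m) (W n) = sm (h1 * (h1 - k2) / c) (L (m+n+1)) \<oplus> sm k2 (W (m+n+1))"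

fun P9 :: "complex \<Rightarrow> complex \<Rightarrow> basis \<Rightarrow> basis \<Rightarrow> vec" where
  "P9 h1 k1 (L m) (L n) = sm (- nn n) (L (m+n))"
| "P9 h1 k1 (L m) (W n) = sm h1 (L (m+n+1)) \<oplus> sm (- nn n) (W (m+n))"
| "P9 h1 k1 (W m) (L n) = sm h1 (L (m+n+1))"
| "P9 h1 k1 (W m) (W n) = sm k1 (L (m+n+1)) \<oplus> sm h1 (W (m+n+1))"

fun P10 :: "complex \<Rightarrow> complex \<Rightarrow> complex \<Rightarrow> basis \<Rightarrow> basis \<Rightarrow> vec" where
  "P10 c k1 k2 (L m) (L n) = sm c (L (m+n+1)) \<oplus> sm (- nn n) (L (m+n))"
| "P10 c k1 k2 (L m) (W n) = sm c (W (m+n+1)) \<oplus> sm (- nn n) (W (m+n))"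
| "P10 c k1 k2 (W m) (L n) = sm c (W (m+n+1))"
| "P10 c k1 k2 (W m) (W n) = sm k1 (L (m+n+1)) \<oplus> sm k2 (W (m+n+1))"

fun P11 :: "complex \<Rightarrow> complex \<Rightarrow> basis \<Rightarrow> basis \<Rightarrow> vec" where
  "P11 c k2 (L m) (L n) = sm c (L (m+n+1)) \<oplus> sm (- nn n) (L (m+n))"
| "P11 c k2 (L m) (W n) = sm (- of_int (m+n+2)) (W (m+n)) \<oplus> sm c (W (m+n+1))"
| "P11 c k2 (W m) (L n) = sm (- nn n) (W (m+n)) \<oplus> sm c (W (m+n+1))"
| "P11 c k2 (W m) (W n) = sm k2 (W (m+n+1))"

end

theory Submission
  imports Defs
begin

text \<open>Both defining conditions of a compatible left-symmetric structure are multilinear, and the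
bilinear extension of a product whose values are finitely supported commutes with finite linear
combinations. Hence it suffices to verify them on basis vectors, where left-symmetry and the
commutator condition become finitely many identities between structure constants: polynomial
identities in the integer indices and the parameters, settled by case analysis on the types of
the basis elements.\<close>

definition supp :: "vec \<Rightarrow> basis set" where
  "supp x = {i. x i \<noteq> 0}"

lemma fsupp_iff_finite_supp: "fsupp x \<longleftrightarrow> finite (supp x)"
  by (simp add: fsupp_def supp_def)

lemma bil_eq_sum_superset:
  assumes "finite S" "finite T" "supp x \<subseteq> S" "supp y \<subseteq> T"
  shows "bil P x y k = (\<Sum>i\<in>S. \<Sum>j\<in>T. x i * y j * P i j k)"
proof -
  have "bil P x y k = (\<Sum>i\<in>S. \<Sum>j\<in>supp y. x i * y j * P i j k)"
    unfolding bil_def supp_def[symmetric]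
    by (rule sum.mono_neutral_left) (use assms in \<open>auto simp: supp_def\<close>)
  also have "\<dots> = (\<Sum>i\<in>S. \<Sum>j\<in>T. x i * y j * P i j k)"
    by (intro sum.cong refl sum.mono_neutral_left) (use assms in \<open>auto simp: supp_def\<close>)
  finally show ?thesis .
qed

lemma supp_bil_subset: "supp (bil P x y) \<subseteq> (\<Union>i\<in>supp x. \<Union>j\<in>supp y. supp (P i j))"
proof
  fix k assume "k \<in> supp (bil P x y)"
  then have "(\<Sum>i\<in>supp x. \<Sum>j\<in>supp y. x i * y j * P i j k) \<noteq> 0"
    by (simp add: supp_def bil_def)
  then obtain i j where "i \<in> supp x" "j \<in> supp y" "P i j k \<noteq> 0"
    by (metis (no_types, lifting) mult_zero_right sum.neutral)
  then show "k \<in> (\<Union>i\<in>supp x. \<Union>j\<in>supp y. supp (P i j))"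
    by (auto simp: supp_def)
qed

abbreviation basis_vec :: "basis \<Rightarrow> vec" where
  "basis_vec i \<equiv> sm 1 i"

lemma fsupp_sm [simp]: "fsupp (sm a u)"
  unfolding fsupp_def sm_def by (rule finite_subset[of _ "{u}"]) auto

lemma fsupp_vzero [simp]: "fsupp vzero"
  by (simp add: fsupp_def vzero_def)

lemma fsupp_vadd [simp]: "fsupp v \<Longrightarrow> fsupp w \<Longrightarrow> fsupp (v \<oplus> w)"
  unfolding fsupp_def vadd_def by (rule finite_subset[of _ "{i. v i \<noteq> 0} \<union> {i. w i \<noteq> 0}"]) auto

lemma bil_sm_sm [simp]: "bil P (sm a u) (sm b v) k = a * b * P u v k"
  by (subst bil_eq_sum_superset[of "{u}" "{v}"]) (auto simp: supp_def sm_def)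

lemma bil_basis_vec_basis_vec: "bil P (basis_vec i) (basis_vec j) = P i j"
  by (rule ext) simp

lemma bil_vzero_left [simp]: "bil P vzero y = vzero"
  by (simp add: bil_def vzero_def)

lemma bil_vzero_right [simp]: "bil P x vzero = vzero"
  by (simp add: bil_def vzero_def)

lemma bil_vadd_left [simp]:
  assumes "fsupp v" "fsupp w" "fsupp z"
  shows "bil P (v \<oplus> w) z k = bil P v z k + bil P w z k"
  using assms unfolding fsupp_iff_finite_supp
  by (subst (1 2 3) bil_eq_sum_superset[of "supp v \<union> supp w" "supp z"])
     (auto simp: supp_def vadd_def distrib_right sum.distrib)

lemma bil_vadd_right [simp]:
  assumes "fsupp x" "fsupp v" "fsupp w"
  shows "bil P x (v \<oplus> w) k = bil P x v k + bil P x w k"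
  using assms unfolding fsupp_iff_finite_supp
  by (subst (1 2 3) bil_eq_sum_superset[of "supp x" "supp v \<union> supp w"])
     (auto simp: supp_def vadd_def ring_distribs sum.distrib)

lemma bil_expand_first:
  assumes "fsupp x" "fsupp w"
  shows "bil P x w k = (\<Sum>i\<in>supp x. x i * bil P (basis_vec i) w k)"
proof -
  have fin: "finite (supp x)" "finite (supp w)"
    using assms by (simp_all add: fsupp_iff_finite_supp)
  have "bil P (basis_vec i) w k = (\<Sum>j\<in>supp w. w j * P i j k)" for i
    by (subst bil_eq_sum_superset[OF _ fin(2), of "{i}"]) (auto simp: supp_def sm_def)
  then show ?thesis
    by (simp add: bil_eq_sum_superset[OF fin] sum_distrib_left mult.assoc)
qed

lemma bil_expand_second:
  assumes "fsupp w" "fsupp z"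
  shows "bil P w z k = (\<Sum>l\<in>supp z. z l * bil P w (basis_vec l) k)"
proof -
  have fin: "finite (supp w)" "finite (supp z)"
    using assms by (simp_all add: fsupp_iff_finite_supp)
  have "bil P w (basis_vec l) k = (\<Sum>i\<in>supp w. w i * P i l k)" for l
    by (subst bil_eq_sum_superset[OF fin(1), of "{l}"]) (auto simp: supp_def sm_def)
  then show ?thesis
    by (simp add: bil_eq_sum_superset[OF fin] sum_distrib_left sum.swap[of _ "supp z"] mult_ac)
qed

lemma sum_weighted_bil:
  "(\<Sum>u\<in>U. c u * bil Q x y u) = (\<Sum>i\<in>supp x. \<Sum>j\<in>supp y. x i * y j * (\<Sum>u\<in>U. c u * Q i j u))"
proof -
  have "(\<Sum>u\<in>U. c u * bil Q x y u) = (\<Sum>u\<in>U. \<Sum>i\<in>supp x. \<Sum>j\<in>supp y. x i * y j * (c u * Q i j u))"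
    by (simp add: bil_def supp_def sum_distrib_left mult_ac)
  also have "\<dots> = (\<Sum>i\<in>supp x. \<Sum>j\<in>supp y. \<Sum>u\<in>U. x i * y j * (c u * Q i j u))"
    by (subst sum.swap) (simp add: sum.swap[of _ U])
  finally show ?thesis
    by (simp add: sum_distrib_left)
qed

lemma bil_bil_first:
  assumes Q: "\<And>i j. fsupp (Q i j)" and "fsupp x" "fsupp y" "fsupp z"
  shows "bil P (bil Q x y) z k = (\<Sum>i\<in>supp x. \<Sum>j\<in>supp y. x i * y j * bil P (Q i j) z k)"
proof -
  define U where "U = (\<Union>i\<in>supp x. \<Union>j\<in>supp y. supp (Q i j))"
  define c where "c u = (\<Sum>l\<in>supp z. z l * P u l k)" for u
  have fin: "finite U" "finite (supp z)"
    using assms unfolding U_def fsupp_iff_finite_supp by auto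
  have bil_U: "bil P w z k = (\<Sum>u\<in>U. c u * w u)" if "supp w \<subseteq> U" for w
    by (simp add: bil_eq_sum_superset[OF fin that order.refl] c_def sum_distrib_left mult_ac)
  have "bil P (bil Q x y) z k = (\<Sum>u\<in>U. c u * bil Q x y u)"
    by (rule bil_U) (simp add: U_def supp_bil_subset)
  also have "\<dots> = (\<Sum>i\<in>supp x. \<Sum>j\<in>supp y. x i * y j * bil P (Q i j) z k)"
    unfolding sum_weighted_bil
    by (intro sum.cong refl arg_cong2[where f = "(*)"] bil_U[symmetric]) (auto simp: U_def)
  finally show ?thesis .
qed

lemma bil_bil_second:
  assumes Q: "\<And>i j. fsupp (Q i j)" and "fsupp x" "fsupp y" "fsupp z"
  shows "bil P x (bil Q y z) k = (\<Sum>j\<in>supp y. \<Sum>l\<in>supp z. y j * z l * bil P x (Q j l) k)"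
proof -
  define U where "U = (\<Union>j\<in>supp y. \<Union>l\<in>supp z. supp (Q j l))"
  define c where "c u = (\<Sum>i\<in>supp x. x i * P i u k)" for u
  have fin: "finite (supp x)" "finite U"
    using assms unfolding U_def fsupp_iff_finite_supp by auto
  have bil_U: "bil P x w k = (\<Sum>u\<in>U. c u * w u)" if "supp w \<subseteq> U" for w
    by (simp add: bil_eq_sum_superset[OF fin order.refl that] c_def sum_distrib_left
        sum_distrib_right sum.swap[of _ U] mult_ac)
  have "bil P x (bil Q y z) k = (\<Sum>u\<in>U. c u * bil Q y z u)"
    by (rule bil_U) (simp add: U_def supp_bil_subset)
  also have "\<dots> = (\<Sum>j\<in>supp y. \<Sum>l\<in>supp z. y j * z l * bil P x (Q j l) k)"
    unfolding sum_weighted_bil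
    by (intro sum.cong refl arg_cong2[where f = "(*)"] bil_U[symmetric]) (auto simp: U_def)
  finally show ?thesis .
qed

definition associator :: "(basis \<Rightarrow> basis \<Rightarrow> vec) \<Rightarrow> vec \<Rightarrow> vec \<Rightarrow> vec \<Rightarrow> vec" where
  "associator P x y z = bil P (bil P x y) z \<ominus> bil P x (bil P y z)"

lemma associator_basis_vec:
  "associator P (basis_vec i) (basis_vec j) (basis_vec l) =
     bil P (P i j) (basis_vec l) \<ominus> bil P (basis_vec i) (P j l)"
  by (simp add: associator_def bil_basis_vec_basis_vec)

lemma associator_expand:
  assumes P: "\<And>i j. fsupp (P i j)" and x: "fsupp x" and y: "fsupp y" and z: "fsupp z"
  shows "associator P x y z k = (\<Sum>i\<in>supp x. \<Sum>j\<in>supp y. \<Sum>l\<in>supp z.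
           x i * y j * z l * associator P (basis_vec i) (basis_vec j) (basis_vec l) k)"
proof -
  have left: "bil P (bil P x y) z k = (\<Sum>i\<in>supp x. \<Sum>j\<in>supp y. \<Sum>l\<in>supp z.
                 x i * y j * z l * bil P (P i j) (basis_vec l) k)"
    by (simp add: bil_bil_first[OF P x y z] bil_expand_second[OF P z] sum_distrib_left mult_ac)
  have "bil P x (bil P y z) k = (\<Sum>j\<in>supp y. \<Sum>l\<in>supp z. \<Sum>i\<in>supp x.
          x i * y j * z l * bil P (basis_vec i) (P j l) k)"
    by (simp add: bil_bil_second[OF P x y z] bil_expand_first[OF x P] sum_distrib_left mult_ac)
  also have "\<dots> = (\<Sum>i\<in>supp x. \<Sum>j\<in>supp y. \<Sum>l\<in>supp z.
          x i * y j * z l * bil P (basis_vec i) (P j l) k)"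
    by (subst sum.swap) (simp add: sum.swap[where B = "supp z"])
  finally show ?thesis
    by (simp add: associator_def vsub_def left bil_basis_vec_basis_vec right_diff_distrib
        sum_subtractf[symmetric])
qed

lemma associator_commute_if_basis:
  assumes P: "\<And>i j. fsupp (P i j)"
    and basis: "\<And>i j l. associator P (basis_vec i) (basis_vec j) (basis_vec l) =
                         associator P (basis_vec j) (basis_vec i) (basis_vec l)"
    and "fsupp x" "fsupp y" "fsupp z"
  shows "associator P x y z = associator P y x z"
proof
  fix k
  have "associator P x y z k = (\<Sum>i\<in>supp x. \<Sum>j\<in>supp y. \<Sum>l\<in>supp z.
          y j * x i * z l * associator P (basis_vec j) (basis_vec i) (basis_vec l) k)"
    by (simp add: associator_expand[OF assms(1,3-5)] basis mult_ac)
  also have "\<dots> = associator P y x z k"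
    by (simp add: associator_expand[OF assms(1,4,3,5)]) (rule sum.swap)
  finally show "associator P x y z k = associator P y x z k" .
qed

lemma bil_commutator: "bil P x y \<ominus> bil P y x = bil (\<lambda>i j. P i j \<ominus> P j i) x y"
proof
  fix k
  have "bil P y x k = (\<Sum>i\<in>supp x. \<Sum>j\<in>supp y. x i * y j * P j i k)"
    unfolding bil_def supp_def by (subst sum.swap) (simp add: mult_ac)
  then show "(bil P x y \<ominus> bil P y x) k = bil (\<lambda>i j. P i j \<ominus> P j i) x y k"
    by (simp add: vsub_def bil_def supp_def right_diff_distrib sum_subtractf)
qed

lemma is_clsaI_basis:
  assumes "\<And>i j. fsupp (P i j)"
    and "\<And>i j l. associator P (basis_vec i) (basis_vec j) (basis_vec l) =
                  associator P (basis_vec j) (basis_vec i) (basis_vec l)"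
    and "\<And>i j. P i j \<ominus> P j i = lie a b i j"
  shows "is_clsa a b P"
  unfolding is_clsa_def associator_def[symmetric] bil_commutator assms(3)
  using associator_commute_if_basis[OF assms(1,2)] by blast

lemma P1_is_clsa: "is_clsa a b (P1 a b c)"
  by (rule is_clsaI_basis; case_tac i; case_tac j; case_tac "l::basis";
      simp add: associator_basis_vec fun_eq_iff vsub_def;
      auto simp: sm_def vadd_def vzero_def algebra_simps)

lemma P2_is_clsa: "is_clsa a b (P2 a b c)"
  by (rule is_clsaI_basis; case_tac i; case_tac j; case_tac "l::basis";
      simp add: associator_basis_vec fun_eq_iff vsub_def;
      auto simp: sm_def vadd_def vzero_def algebra_simps)

lemma P3_is_clsa: "is_clsa a b (P3 a b c)"
  by (rule is_clsaI_basis; case_tac i; case_tac j; case_tac "l::basis";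
      simp add: associator_basis_vec fun_eq_iff vsub_def;
      auto simp: sm_def vadd_def vzero_def algebra_simps)

lemma P4_is_clsa: "is_clsa 1 b (P4 b k1)"
  by (rule is_clsaI_basis; case_tac i; case_tac j; case_tac "l::basis";
      simp add: associator_basis_vec fun_eq_iff vsub_def;
      auto simp: sm_def vadd_def vzero_def algebra_simps)

lemma P5_is_clsa:
  assumes "b \<noteq> 0"
  shows "is_clsa 1 b (P5 b d)"
  by (rule is_clsaI_basis; case_tac i; case_tac j; case_tac "l::basis";
      simp add: associator_basis_vec fun_eq_iff vsub_def;
      auto simp: sm_def vadd_def vzero_def algebra_simps assms field_simps power2_eq_square)

lemma P6_is_clsa: "is_clsa 1 0 (P6 c k2)"
  by (rule is_clsaI_basis; case_tac i; case_tac j; case_tac "l::basis";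
      simp add: associator_basis_vec fun_eq_iff vsub_def;
      auto simp: sm_def vadd_def vzero_def algebra_simps)

lemma P7_is_clsa: "is_clsa 1 0 (P7 k1 k2)"
  by (rule is_clsaI_basis; case_tac i; case_tac j; case_tac "l::basis";
      simp add: associator_basis_vec fun_eq_iff vsub_def;
      auto simp: sm_def vadd_def vzero_def algebra_simps)

lemma P8_is_clsa:
  assumes "c \<noteq> 0"
  shows "is_clsa 1 0 (P8 c h1 k2)"
  by (rule is_clsaI_basis; case_tac i; case_tac j; case_tac "l::basis";
      simp add: associator_basis_vec fun_eq_iff vsub_def;
      auto simp: sm_def vadd_def vzero_def algebra_simps assms field_simps)

lemma P9_is_clsa: "is_clsa 1 0 (P9 h1 k1)"
  by (rule is_clsaI_basis; case_tac i; case_tac j; case_tac "l::basis";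
      simp add: associator_basis_vec fun_eq_iff vsub_def;
      auto simp: sm_def vadd_def vzero_def algebra_simps)

lemma P10_is_clsa: "is_clsa 1 0 (P10 c k1 k2)"
  by (rule is_clsaI_basis; case_tac i; case_tac j; case_tac "l::basis";
      simp add: associator_basis_vec fun_eq_iff vsub_def;
      auto simp: sm_def vadd_def vzero_def algebra_simps)

lemma P11_is_clsa: "is_clsa 1 0 (P11 c k2)"
  by (rule is_clsaI_basis; case_tac i; case_tac j; case_tac "l::basis";
      simp add: associator_basis_vec fun_eq_iff vsub_def;
      auto simp: sm_def vadd_def vzero_def algebra_simps)

theorem corollary3p8:
  shows "(\<forall>a b c. is_clsa a b (P1 a b c))
       \<and> (\<forall>a b c. c \<noteq> 0 \<longrightarrow> is_clsa a b (P2 a b c))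
       \<and> (\<forall>a b c. is_clsa a b (P3 a b c))
       \<and> (\<forall>b k1. k1 \<noteq> 0 \<longrightarrow> is_clsa 1 b (P4 b k1))
       \<and> (\<forall>b d. b \<noteq> 0 \<and> d \<noteq> 0 \<longrightarrow> is_clsa 1 b (P5 b d))
       \<and> (\<forall>c k2. k2 \<noteq> 0 \<longrightarrow> is_clsa 1 0 (P6 c k2))
       \<and> (\<forall>k1 k2. k1 \<noteq> 0 \<and> k2 \<noteq> 0 \<longrightarrow> is_clsa 1 0 (P7 k1 k2))
       \<and> (\<forall>c h1 k2. c \<noteq> 0 \<and> h1 \<noteq> 0 \<longrightarrow> is_clsa 1 0 (P8 c h1 k2))
       \<and> (\<forall>h1 k1. h1 \<noteq> 0 \<and> k1 \<noteq> 0 \<longrightarrow> is_clsa 1 0 (P9 h1 k1))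
       \<and> (\<forall>c k1 k2. c \<noteq> 0 \<and> (k1, k2) \<noteq> (0, 0) \<longrightarrow> is_clsa 1 0 (P10 c k1 k2))
       \<and> (\<forall>c k2. k2 \<noteq> 0 \<longrightarrow> is_clsa 1 0 (P11 c k2))"
  by (simp add: P1_is_clsa P2_is_clsa P3_is_clsa P4_is_clsa P5_is_clsa P6_is_clsa P7_is_clsa
      P8_is_clsa P9_is_clsa P10_is_clsa P11_is_clsa)

end
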